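(* Let $A\in\mathbb{R}^{n\times d}$, $k\ge1$. Let $\mathbf{S}\in\mathbb{R}^{m\times d}$ be a random matrix such that with probability at least $9/10$, $\min_{\mathrm{rank}(X)\le k}\|A\mathbf{S}^{\mathsf T}X-A\|_{1,2}\le\frac32\mathrm{SubApx}_{k,1}(A)$. Let $\mathbf{L}$ be a random matrix with $n$ columns such that, with probability at least $9/10$, $\alpha\|A\mathbf{S}^{\mathsf T}y\|_1\le\|\mathbf{L}A\mathbf{S}^{\mathsf T}y\|_1\le\beta\|A\mathbf{S}^{\mathsf T}y\|_1$ for all vectors $y$ (where $0<\alpha\le\beta$), and such that, conditionally on $\mathbf{S}$, $\mathbb{E}_{\mathbf{L}}[\|\mathbf{L}M\|_{1,2}]=\|M\|_{1,2}$ for every fixed matrix $M$ with $n$ rows. Then with probability at least $3/5$, every matrix $X\in\mathbb{R}^{m\times d}$ with $\|\mathbf{L}A\mathbf{S}^{\mathsf T}X-\mathbf{L}A\|_{1,2}\le10\,\mathrm{SubApx}_{k,1}(A)$ satisfies $$\|A\mathbf{S}^{\mathsf T}X-A\|_{1,2}\le(2+40/\alpha)\,\mathrm{SubApx}_{k,1}(A).$$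
   Context: $\|M\|_{1,2}=\sum_i\|M_{i*}\|_2$ (sum of Euclidean norms of rows). $\mathrm{SubApx}_{k,1}(A)=\min\{\sum_i\mathrm{dist}(A_{i*},Q):Q\text{ linear subspace of }\mathbb{R}^d,\dim Q\le k\}$, where $\mathrm{dist}(x,Q)=\min_{q\in Q}\|x-q\|_2$. *)

theory Defs
  imports "HOL-Probability.Probability"
begin

definition norm12 :: "real^'c^'r \<Rightarrow> real" where
  "norm12 M = (\<Sum>i\<in>UNIV. norm (M $ i))"

definition norm1 :: "real^'r \<Rightarrow> real" where
  "norm1 v = (\<Sum>i\<in>UNIV. \<bar>v $ i\<bar>)"

text \<open>SubApx_{k,1}(A): best sum of distances of the rows of A to a linear subspace of
  dimension at most k (the minimum is attained; we write it as an infimum).\<close>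
definition SubApx :: "nat \<Rightarrow> real^'d^'n \<Rightarrow> real" where
  "SubApx k A = Inf {(\<Sum>i\<in>UNIV. infdist (A $ i) Q) | Q. subspace Q \<and> dim Q \<le> k}"

definition rank_k_cost :: "nat \<Rightarrow> real^'d^'n \<Rightarrow> real^'d^'m \<Rightarrow> real" where
  "rank_k_cost k A S = Inf {norm12 (A ** transpose S ** X - A) | X :: real^'d^'m. rank X \<le> k}"

end

(*
  Fix S and pick X' with ||A S^T X' - A||_{1,2} < c for some c slightly above 3/2 SubApx.  As L is
  unbiased, Markov's inequality gives ||L (A S^T X' - A)||_{1,2} <= 10 c with probability 9/10;
  together with the embedding event this leaves probability at least 81/100 + 9/10 - 1 > 3/5.
  There, for X as in the theorem, the triangle inequality bounds ||L A S^T (X - X')||_{1,2} by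
  10 SubApx + 10 c, the embedding bounds ||A S^T (X - X')||_{1,2} by that divided by alpha, and so
  ||A S^T X - A||_{1,2} <= (10 SubApx + 10 c) / alpha + c, which tends to 25 SubApx / alpha + 3/2 SubApx.
  The embedding, assumed for vectors only, lifts to the (1,2)-norm because the mean of ||Z g||_1 over
  a standard Gaussian vector g is sqrt (2 / pi) ||Z||_{1,2} (2-stability).
*)

theory Submission
  imports Defs
begin

definition std_gaussian :: "('d \<Rightarrow> real) measure" where
  "std_gaussian = (\<Pi>\<^sub>M i\<in>UNIV. std_normal_distribution)"

lemma prob_space_std_gaussian: "prob_space std_gaussian"
  unfolding std_gaussian_def by (intro prob_space_PiM prob_space_normal_density) simp

lemma sets_std_gaussian: "sets std_gaussian = sets (\<Pi>\<^sub>M i\<in>UNIV. borel)"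
  unfolding std_gaussian_def by (intro sets_PiM_cong) simp_all

lemma distr_std_gaussian_component:
  "distr std_gaussian borel (\<lambda>g. g i) = std_normal_distribution"
proof -
  have "distr std_gaussian borel (\<lambda>g. g i) = distr std_gaussian std_normal_distribution (\<lambda>g. g i)"
    by (rule distr_cong) simp_all
  also have "\<dots> = std_normal_distribution"
    unfolding std_gaussian_def by (rule distr_PiM_component) (simp_all add: prob_space_normal_density)
  finally show ?thesis .
qed

lemma indep_vars_std_gaussian_components:
  "prob_space.indep_vars std_gaussian (\<lambda>_. borel) (\<lambda>i g. g i) UNIV"
proof -
  interpret prob_space std_gaussian by (rule prob_space_std_gaussian)
  have "distr std_gaussian (\<Pi>\<^sub>M i\<in>UNIV. borel) (\<lambda>g. restrict g UNIV) = std_gaussian"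
    using distr_id2[OF sets_std_gaussian[symmetric]] by (simp add: restrict_UNIV)
  also have "\<dots> = (\<Pi>\<^sub>M i\<in>UNIV. distr std_gaussian borel (\<lambda>g. g i))"
    unfolding distr_std_gaussian_component by (simp add: std_gaussian_def)
  finally show ?thesis
    by (subst indep_vars_iff_distr_eq_PiM) (simp_all add: measurable_cong_sets[OF sets_std_gaussian])
qed

lemma std_gaussian_component_distributed:
  "distributed std_gaussian lborel (\<lambda>g. g i) std_normal_density"
proof -
  have "distr std_gaussian lborel (\<lambda>g. g i) = distr std_gaussian borel (\<lambda>g. g i)"
    by (rule distr_cong) simp_all
  then show ?thesis
    by (simp add: distributed_def distr_std_gaussian_component measurable_cong_sets[OF sets_std_gaussian])
qed

lemma std_gaussian_inner_distributed:
  fixes z :: "real^'d::finite"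
  assumes "z \<noteq> 0"
  shows "distributed std_gaussian lborel (\<lambda>g. z \<bullet> (\<chi> j. g j)) (normal_density 0 (norm z))"
proof -
  interpret prob_space std_gaussian by (rule prob_space_std_gaussian)
  define I where "I = {j. z$j \<noteq> 0}"
  have I: "finite I" "I \<noteq> {}"
    using assms by (auto simp: I_def vec_eq_iff)
  have inner_eq: "z \<bullet> (\<chi> j. g j) = (\<Sum>j\<in>I. z$j * g j)" for g :: "'d \<Rightarrow> real"
    by (simp add: inner_vec_def, rule sum.mono_neutral_right) (auto simp: I_def)
  have norm_eq: "norm z = sqrt (\<Sum>j\<in>I. \<bar>z$j\<bar>\<^sup>2)"
    unfolding norm_vec_def L2_set_def by (simp, rule sum.mono_neutral_right) (auto simp: I_def)
  have "indep_vars (\<lambda>_. borel) (\<lambda>j g. z$j * g j) I"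
    by (rule indep_vars_compose2[OF indep_vars_subset[OF indep_vars_std_gaussian_components]]) auto
  moreover have "distributed std_gaussian lborel (\<lambda>g. z$j * g j) (normal_density 0 \<bar>z$j\<bar>)"
    if "j \<in> I" for j
    using normal_density_affine[OF std_gaussian_component_distributed, of "z$j" 0] that
    by (simp add: I_def)
  ultimately show ?thesis
    using sum_indep_normal[OF I, of "\<lambda>j g. z$j * g j" "\<lambda>j. \<bar>z$j\<bar>" "\<lambda>_. 0"]
    by (simp add: inner_eq norm_eq I_def)
qed

lemma std_gaussian_abs_inner:
  fixes z :: "real^'d::finite"
  shows "integrable std_gaussian (\<lambda>g. \<bar>z \<bullet> (\<chi> j. g j)\<bar>)"
    and "(\<integral>g. \<bar>z \<bullet> (\<chi> j. g j)\<bar> \<partial>std_gaussian) = sqrt (2/pi) * norm z"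
proof -
  have "integrable std_gaussian (\<lambda>g. \<bar>z \<bullet> (\<chi> j. g j)\<bar>) \<and>
      (\<integral>g. \<bar>z \<bullet> (\<chi> j. g j)\<bar> \<partial>std_gaussian) = sqrt (2/pi) * norm z"
  proof (cases "z = 0")
    case False
    note D = std_gaussian_inner_distributed[OF False]
    have "integrable lborel (\<lambda>x. normal_density 0 (norm z) x * \<bar>x\<bar>)"
      using integrable_normal_moment_abs[where \<mu>=0 and \<sigma>="norm z" and k=1] False by simp
    moreover have "(\<integral>x. normal_density 0 (norm z) x * \<bar>x\<bar> \<partial>lborel) = sqrt (2/pi) * norm z"
      using integral_normal_moment_abs_odd[where \<mu>=0 and \<sigma>="norm z" and k=0] False by simp
    ultimately show ?thesis
      using distributed_integrable[OF D, of abs] distributed_integral[OF D, of abs] by simp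
  qed simp
  then show "integrable std_gaussian (\<lambda>g. \<bar>z \<bullet> (\<chi> j. g j)\<bar>)"
    and "(\<integral>g. \<bar>z \<bullet> (\<chi> j. g j)\<bar> \<partial>std_gaussian) = sqrt (2/pi) * norm z"
    by blast+
qed

lemma std_gaussian_norm1_mult:
  fixes Z :: "real^'d::finite^'p::finite"
  shows "integrable std_gaussian (\<lambda>g. norm1 (Z *v (\<chi> j. g j)))"
    and "(\<integral>g. norm1 (Z *v (\<chi> j. g j)) \<partial>std_gaussian) = sqrt (2/pi) * norm12 Z"
  by (simp_all add: norm1_def norm12_def matrix_vector_mul_component std_gaussian_abs_inner
      sum_distrib_left)

lemma norm12_mult_le_of_norm1_mult_le:
  fixes W :: "real^'m::finite^'n::finite" and V :: "real^'m^'r::finite" and Y :: "real^'d::finite^'m"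
  assumes "\<And>y. \<alpha> * norm1 (W *v y) \<le> norm1 (V *v y)"
  shows "\<alpha> * norm12 (W ** Y) \<le> norm12 (V ** Y)"
proof -
  note W = std_gaussian_norm1_mult[of "W ** Y"] and V = std_gaussian_norm1_mult[of "V ** Y"]
  have "sqrt (2/pi) * (\<alpha> * norm12 (W ** Y))
      = (\<integral>g. \<alpha> * norm1 ((W ** Y) *v (\<chi> j. g j)) \<partial>std_gaussian)"
    using W by simp
  also have "\<dots> \<le> (\<integral>g. norm1 ((V ** Y) *v (\<chi> j. g j)) \<partial>std_gaussian)"
    using W V assms by (intro integral_mono) (simp_all flip: matrix_vector_mul_assoc)
  also have "\<dots> = sqrt (2/pi) * norm12 (V ** Y)"
    using V by simp
  finally show ?thesis
    by simp
qed

lemma norm12_nonneg: "0 \<le> norm12 M"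
  unfolding norm12_def by (simp add: sum_nonneg)

lemma norm12_triangle_ineq: "norm12 (P + Q) \<le> norm12 P + norm12 Q"
  unfolding norm12_def by (simp add: sum.distrib[symmetric] sum_mono norm_triangle_ineq)

lemma norm12_triangle_ineq4: "norm12 (P - Q) \<le> norm12 P + norm12 Q"
  unfolding norm12_def by (simp add: sum.distrib[symmetric] sum_mono norm_triangle_ineq4)

lemma matrix_diff_ldistrib: "(A::'a::ring_1^'n::finite^'m) ** (B - C) = A ** B - A ** C"
  by (vector matrix_matrix_mult_def sum_subtractf[symmetric] algebra_simps)

lemma norm12_residual_le_of_sketch:
  fixes W :: "real^'m::finite^'n::finite" and A :: "real^'d::finite^'n" and L :: "real^'n^'r::finite"
  assumes "0 < \<alpha>" and embedding: "\<And>y. \<alpha> * norm1 (W *v y) \<le> norm1 ((L ** W) *v y)"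
    and "norm12 (L ** W ** X - L ** A) \<le> a"
    and "norm12 (W ** X' - A) \<le> c" and "norm12 (L ** (W ** X' - A)) \<le> b"
  shows "norm12 (W ** X - A) \<le> (a + b) / \<alpha> + c"
proof -
  have "\<alpha> * norm12 (W ** (X - X')) \<le> norm12 (L ** W ** (X - X'))"
    by (rule norm12_mult_le_of_norm1_mult_le[OF embedding])
  also have "L ** W ** (X - X') = (L ** W ** X - L ** A) - L ** (W ** X' - A)"
    by (simp add: matrix_diff_ldistrib matrix_mul_assoc)
  also have "norm12 \<dots> \<le> a + b"
    using norm12_triangle_ineq4[of "L ** W ** X - L ** A" "L ** (W ** X' - A)"] assms(3,5)
    by linarith
  finally have "\<alpha> * norm12 (W ** (X - X')) \<le> a + b" .
  then have "norm12 (W ** (X - X')) \<le> (a + b) / \<alpha>"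
    using \<open>0 < \<alpha>\<close> by (simp add: field_simps)
  moreover have "norm12 (W ** X - A) \<le> norm12 (W ** (X - X')) + norm12 (W ** X' - A)"
    using norm12_triangle_ineq[of "W ** (X - X')" "W ** X' - A"] by (simp add: matrix_diff_ldistrib)
  ultimately show ?thesis
    using assms(4) by linarith
qed

lemma norm12_residual_le_of_witnesses:
  fixes W :: "real^'m::finite^'n::finite" and A :: "real^'d::finite^'n" and L :: "real^'n^'r::finite"
  assumes "0 < \<alpha>" and "\<And>y. \<alpha> * norm1 (W *v y) \<le> norm1 ((L ** W) *v y)"
    and "norm12 (L ** W ** X - L ** A) \<le> a"
    and "\<And>c. c0 < c \<Longrightarrow> \<exists>X'. norm12 (W ** X' - A) < c \<and> norm12 (L ** (W ** X' - A)) \<le> K * c"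
  shows "norm12 (W ** X - A) \<le> (a + K * c0) / \<alpha> + c0"
proof (rule tendsto_lowerbound)
  show "((\<lambda>c. (a + K * c) / \<alpha> + c) \<longlongrightarrow> (a + K * c0) / \<alpha> + c0) (at_right c0)"
    using \<open>0 < \<alpha>\<close> by (intro tendsto_intros) simp
  show "\<forall>\<^sub>F c in at_right c0. norm12 (W ** X - A) \<le> (a + K * c) / \<alpha> + c"
    using eventually_at_right_less[of c0]
  proof eventually_elim
    case (elim c)
    then obtain X' where "norm12 (W ** X' - A) < c" "norm12 (L ** (W ** X' - A)) \<le> K * c"
      using assms(4) by blast
    then show ?case
      by (intro norm12_residual_le_of_sketch[OF assms(1-3)]) simp_all
  qed
qed simp

lemma (in prob_space) Markov_prob_less_ge:
  assumes [measurable]: "f \<in> borel_measurable M" and "\<And>x. 0 \<le> f x"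
    and "(\<integral>\<^sup>+x. ennreal (f x) \<partial>M) = ennreal v" and "0 \<le> v" "v < c" "0 < K"
  shows "1 - 1/K \<le> prob {x\<in>space M. f x < K * c}"
proof -
  have "integrable M f"
    using assms by (intro integrableI_nonneg) auto
  moreover have "(\<integral>x. f x \<partial>M) = v"
    using assms by (subst integral_eq_nn_integral) auto
  ultimately have "prob {x\<in>space M. K * c \<le> f x} \<le> v / (K * c)"
    using integral_Markov_inequality_measure[of M f "space M" "K * c"] assms by auto
  also have "\<dots> \<le> 1/K"
    using assms by (simp add: field_simps)
  finally have "prob {x\<in>space M. K * c \<le> f x} \<le> 1/K" .
  moreover have "{x\<in>space M. f x < K * c} = space M - {x\<in>space M. K * c \<le> f x}"
    by auto
  ultimately show ?thesis
    by (simp add: prob_compl)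
qed

lemma (in prob_space) prob_Int_ge:
  assumes "A \<in> events" "B \<in> events"
  shows "prob A + prob B - 1 \<le> prob (A \<inter> B)"
  using finite_measure_Union'[OF assms] finite_measure_Diff'[OF assms(2,1)] prob_le_1[of "A \<union> B"]
  by (simp add: Int_commute)

lemma (in finite_measure) measure_INT_decseq_ge:
  assumes "range F \<subseteq> sets M" "decseq F" "\<And>j. q \<le> measure M (F j)"
  shows "q \<le> measure M (\<Inter>j. F j)"
  using assms by (intro LIMSEQ_le_const[OF finite_Lim_measure_decseq]) auto

lemma (in pair_prob_space) measure_pair_ge_of_sections:
  assumes "F \<in> sets (M1 \<Otimes>\<^sub>M M2)" "E \<in> sets M1" "0 \<le> q"
    and "\<And>\<omega>. \<omega> \<in> E \<Longrightarrow> q \<le> measure M2 (Pair \<omega> -` F)"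
  shows "q * measure M1 E \<le> measure (M1 \<Otimes>\<^sub>M M2) F"
proof -
  have "ennreal q * emeasure M1 E = (\<integral>\<^sup>+\<omega>. ennreal q * indicator E \<omega> \<partial>M1)"
    using assms(2) by (simp add: nn_integral_cmult_indicator)
  also have "\<dots> \<le> (\<integral>\<^sup>+\<omega>. emeasure M2 (Pair \<omega> -` F) \<partial>M1)"
    using assms(4) by (intro nn_integral_mono)
      (auto split: split_indicator simp: M2.emeasure_eq_measure intro: ennreal_leI)
  also have "\<dots> = emeasure (M1 \<Otimes>\<^sub>M M2) F"
    by (rule M2.emeasure_pair_measure_alt[OF assms(1), symmetric])
  finally show ?thesis
    using assms(3)
    by (simp add: M1.emeasure_eq_measure P.emeasure_eq_measure ennreal_mult[symmetric])
qed

locale unbiased_estimator = pair_prob_space M1 M2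
  for M1 :: "'a measure" and M2 :: "'b measure" +
  fixes \<phi> :: "'x::second_countable_topology \<Rightarrow> 'a \<Rightarrow> real" and \<psi> :: "'x \<Rightarrow> 'a \<Rightarrow> 'b \<Rightarrow> real"
  assumes \<phi>_measurable [measurable]: "\<And>X. \<phi> X \<in> borel_measurable M1"
    and \<psi>_measurable: "\<And>X. (\<lambda>(\<omega>, \<omega>'). \<psi> X \<omega> \<omega>') \<in> borel_measurable (M1 \<Otimes>\<^sub>M M2)"
    and continuous_on_\<phi>: "\<And>\<omega>. continuous_on UNIV (\<lambda>X. \<phi> X \<omega>)"
    and \<phi>_nonneg: "\<And>X \<omega>. 0 \<le> \<phi> X \<omega>"
    and \<psi>_nonneg: "\<And>X \<omega> \<omega>'. 0 \<le> \<psi> X \<omega> \<omega>'"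
    and nn_integral_\<psi>: "\<And>X \<omega>. \<omega> \<in> space M1 \<Longrightarrow> (\<integral>\<^sup>+\<omega>'. ennreal (\<psi> X \<omega> \<omega>') \<partial>M2) = ennreal (\<phi> X \<omega>)"
begin

lemma \<psi>_measurable_fst_snd [measurable]: "(\<lambda>p. \<psi> X (fst p) (snd p)) \<in> borel_measurable (M1 \<Otimes>\<^sub>M M2)"
  using \<psi>_measurable by (simp add: case_prod_beta')

lemma \<psi>_section_measurable: "\<omega> \<in> space M1 \<Longrightarrow> \<psi> X \<omega> \<in> borel_measurable M2"
  using measurable_Pair2[OF \<psi>_measurable] by simp

text \<open>Taking the witnesses X from a countable dense set keeps the event measurable; the strict
  inequality for \<open>\<phi>\<close> makes the set of admissible witnesses open, so the dense set meets it.\<close>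

lemma measure_witness_event_ge:
  assumes D: "countable D" "\<And>U. open U \<Longrightarrow> U \<noteq> {} \<Longrightarrow> \<exists>X\<in>D. X \<in> U"
    and E: "E \<in> sets M1" "\<And>\<omega>. \<omega> \<in> E \<Longrightarrow> \<exists>X. \<phi> X \<omega> < c"
    and "1 \<le> K"
  defines "F \<equiv> \<Union>X\<in>D. {p \<in> space (M1 \<Otimes>\<^sub>M M2). \<phi> X (fst p) < c \<and> \<psi> X (fst p) (snd p) \<le> K * c}"
  shows "F \<in> sets (M1 \<Otimes>\<^sub>M M2)" and "(1 - 1/K) * measure M1 E \<le> measure (M1 \<Otimes>\<^sub>M M2) F"
proof -
  show F_sets: "F \<in> sets (M1 \<Otimes>\<^sub>M M2)"
    unfolding F_def by (intro sets.countable_UN'' D(1)) measurable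
  show "(1 - 1/K) * measure M1 E \<le> measure (M1 \<Otimes>\<^sub>M M2) F"
  proof (rule measure_pair_ge_of_sections[OF F_sets E(1)])
    show "0 \<le> 1 - 1/K"
      using \<open>1 \<le> K\<close> by simp
    fix \<omega> assume "\<omega> \<in> E"
    then have \<omega>: "\<omega> \<in> space M1"
      using E(1) sets.sets_into_space by blast
    have "open {X. \<phi> X \<omega> < c}"
      using continuous_on_\<phi> by (intro open_Collect_less) auto
    then obtain X where X: "X \<in> D" "\<phi> X \<omega> < c"
      using D(2) E(2)[OF \<open>\<omega> \<in> E\<close>] by blast
    have "1 - 1/K \<le> measure M2 {\<omega>' \<in> space M2. \<psi> X \<omega> \<omega>' < K * c}"
      using X(2) \<open>1 \<le> K\<close> \<omega> nn_integral_\<psi> \<phi>_nonneg \<psi>_nonneg \<psi>_section_measurable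
      by (intro M2.Markov_prob_less_ge) auto
    also have "\<dots> \<le> measure M2 (Pair \<omega> -` F)"
    proof (rule M2.finite_measure_mono)
      show "{\<omega>' \<in> space M2. \<psi> X \<omega> \<omega>' < K * c} \<subseteq> Pair \<omega> -` F"
        using X \<omega> unfolding F_def by (force simp: space_pair_measure)
    qed (rule sets_Pair1[OF F_sets])
    finally show "1 - 1/K \<le> measure M2 (Pair \<omega> -` F)" .
  qed
qed

lemma witness_event:
  assumes "E \<in> sets M1" and "\<And>\<omega> c. \<omega> \<in> E \<Longrightarrow> c0 < c \<Longrightarrow> \<exists>X. \<phi> X \<omega> < c" and "1 \<le> K"
  shows "\<exists>F\<in>sets (M1 \<Otimes>\<^sub>M M2). (1 - 1/K) * measure M1 E \<le> measure (M1 \<Otimes>\<^sub>M M2) F \<and>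
           (\<forall>(\<omega>, \<omega>')\<in>F. \<forall>c>c0. \<exists>X. \<phi> X \<omega> < c \<and> \<psi> X \<omega> \<omega>' \<le> K * c)"
proof -
  obtain D :: "'x set" where D: "countable D" "\<And>U. open U \<Longrightarrow> U \<noteq> {} \<Longrightarrow> \<exists>X\<in>D. X \<in> U"
    using countable_dense_setE by blast
  define c where "c j = c0 + 1 / Suc j" for j :: nat
  define F where
    "F j = (\<Union>X\<in>D. {p \<in> space (M1 \<Otimes>\<^sub>M M2). \<phi> X (fst p) < c j \<and> \<psi> X (fst p) (snd p) \<le> K * c j})"
    for j
  have "c0 < c j" for j
    unfolding c_def by simp
  then have F_sets: "F j \<in> sets (M1 \<Otimes>\<^sub>M M2)"
    and F_measure: "(1 - 1/K) * measure M1 E \<le> measure (M1 \<Otimes>\<^sub>M M2) (F j)" for j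
    unfolding F_def using D assms by (intro measure_witness_event_ge; force)+
  have "decseq F"
  proof (rule decseq_SucI)
    fix j
    have "c (Suc j) \<le> c j" "K * c (Suc j) \<le> K * c j"
      using \<open>1 \<le> K\<close> unfolding c_def by (simp_all add: frac_le)
    then show "F (Suc j) \<subseteq> F j"
      unfolding F_def by fastforce
  qed
  then have "(1 - 1/K) * measure M1 E \<le> measure (M1 \<Otimes>\<^sub>M M2) (\<Inter>j. F j)"
    using F_sets F_measure by (intro measure_INT_decseq_ge) auto
  moreover have "\<exists>X. \<phi> X \<omega> < c' \<and> \<psi> X \<omega> \<omega>' \<le> K * c'"
    if in_F: "(\<omega>, \<omega>') \<in> (\<Inter>j. F j)" and "c0 < c'" for \<omega> \<omega>' c'
  proof -
    obtain j where "inverse (real (Suc j)) < c' - c0"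
      using reals_Archimedean[of "c' - c0"] \<open>c0 < c'\<close> by auto
    then have "c j \<le> c'" "K * c j \<le> K * c'"
      using \<open>1 \<le> K\<close> unfolding c_def by (simp_all add: inverse_eq_divide)
    moreover have "(\<omega>, \<omega>') \<in> F j"
      using in_F by blast
    then obtain X where "\<phi> X \<omega> < c j" "\<psi> X \<omega> \<omega>' \<le> K * c j"
      unfolding F_def by auto
    ultimately show ?thesis
      by (intro exI[of _ X]) simp
  qed
  ultimately show ?thesis
    using F_sets by (intro bexI[of _ "\<Inter>j. F j"]) auto
qed

end

lemma SubApx_nonneg: "0 \<le> SubApx k (A :: real^'d::finite^'n::finite)"
  unfolding SubApx_def
proof (rule cInf_greatest)
  have "subspace {0::real^'d}" "dim {0::real^'d} \<le> k"
    by (simp_all add: subspace_0)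
  then show "{\<Sum>i\<in>UNIV. infdist (A $ i) Q |Q. subspace Q \<and> dim Q \<le> k} \<noteq> {}"
    by blast
qed (auto intro!: sum_nonneg infdist_nonneg)

lemma ex_norm12_less_of_rank_k_cost_less:
  fixes A :: "real^'d::finite^'n::finite" and S :: "real^'d^'m::finite"
  assumes "rank_k_cost k A S < c"
  shows "\<exists>X. norm12 (A ** transpose S ** X - A) < c"
proof -
  have "rank (0::real^'d^'m) \<le> k"
    by simp
  then have "{norm12 (A ** transpose S ** X - A) | X :: real^'d^'m. rank X \<le> k} \<noteq> {}"
    by blast
  from cInf_lessD[OF this assms[unfolded rank_k_cost_def]] show ?thesis
    by blast
qed

lemma continuous_on_matrix_mult [continuous_intros]:
  fixes f :: "'a::topological_space \<Rightarrow> real^'n::finite^'m::finite" and g :: "'a \<Rightarrow> real^'p::finite^'n"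
  shows "continuous_on S f \<Longrightarrow> continuous_on S g \<Longrightarrow> continuous_on S (\<lambda>x. f x ** g x)"
  unfolding matrix_matrix_mult_def by (intro continuous_intros)

lemma continuous_on_transpose [continuous_intros]:
  fixes f :: "'a::topological_space \<Rightarrow> real^'n::finite^'m::finite"
  shows "continuous_on S f \<Longrightarrow> continuous_on S (\<lambda>x. transpose (f x))"
  unfolding transpose_def by (intro continuous_intros)

lemma continuous_on_norm12 [continuous_intros]:
  fixes f :: "'a::topological_space \<Rightarrow> real^'n::finite^'m::finite"
  shows "continuous_on S f \<Longrightarrow> continuous_on S (\<lambda>x. norm12 (f x))"
  unfolding norm12_def by (intro continuous_intros)

lemma borel_measurable_sketch_costs:
  fixes A :: "real^'d::finite^'n::finite" and S :: "'a \<Rightarrow> real^'d^'m::finite"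
    and L :: "'a \<Rightarrow> 'b \<Rightarrow> real^'n^'r::finite"
  assumes "S \<in> borel_measurable M" and "(\<lambda>(\<omega>, \<omega>'). L \<omega> \<omega>') \<in> borel_measurable (M \<Otimes>\<^sub>M N)"
  shows "(\<lambda>\<omega>. norm12 (A ** transpose (S \<omega>) ** X - A)) \<in> borel_measurable M"
    and "(\<lambda>(\<omega>, \<omega>'). norm12 (L \<omega> \<omega>' ** (A ** transpose (S \<omega>) ** X - A))) \<in> borel_measurable (M \<Otimes>\<^sub>M N)"
proof -
  show "(\<lambda>\<omega>. norm12 (A ** transpose (S \<omega>) ** X - A)) \<in> borel_measurable M"
    by (rule borel_measurable_continuous_on[OF _ assms(1)]) (intro continuous_intros)
  have SL: "(\<lambda>p. (S (fst p), L (fst p) (snd p))) \<in> borel_measurable (M \<Otimes>\<^sub>M N)"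
    using assms by (intro borel_measurable_Pair) (simp_all add: case_prod_beta')
  have "(\<lambda>p. (\<lambda>q. norm12 (snd q ** (A ** transpose (fst q) ** X - A)))
      (S (fst p), L (fst p) (snd p))) \<in> borel_measurable (M \<Otimes>\<^sub>M N)"
    by (rule borel_measurable_continuous_on[OF _ SL]) (intro continuous_intros)
  then show "(\<lambda>(\<omega>, \<omega>'). norm12 (L \<omega> \<omega>' ** (A ** transpose (S \<omega>) ** X - A))) \<in> borel_measurable (M \<Otimes>\<^sub>M N)"
    by (simp add: case_prod_beta')
qed

theorem lemma2:
  fixes A :: "real^'d^'n" and k :: nat and \<alpha> \<beta> :: real
    and M :: "'a measure" and N :: "'b measure"
    and S :: "'a \<Rightarrow> real^'d^'m"
    and L :: "'a \<Rightarrow> 'b \<Rightarrow> real^'n^'r"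
  assumes "k \<ge> 1"
    and "0 < \<alpha>" and "\<alpha> \<le> \<beta>"
    and "prob_space M" and "prob_space N"
    and "S \<in> borel_measurable M"
    and "(\<lambda>(\<omega>1, \<omega>2). L \<omega>1 \<omega>2) \<in> borel_measurable (M \<Otimes>\<^sub>M N)"
    and "\<exists>E\<in>sets M. measure M E \<ge> 9/10 \<and>
           (\<forall>\<omega>\<in>E. rank_k_cost k A (S \<omega>) \<le> 3/2 * SubApx k A)"
    and "\<exists>E\<in>sets (M \<Otimes>\<^sub>M N). measure (M \<Otimes>\<^sub>M N) E \<ge> 9/10 \<and>
           (\<forall>(\<omega>1, \<omega>2)\<in>E. \<forall>y :: real^'m.
              \<alpha> * norm1 ((A ** transpose (S \<omega>1)) *v y)
                \<le> norm1 ((L \<omega>1 \<omega>2 ** A ** transpose (S \<omega>1)) *v y) \<and>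
              norm1 ((L \<omega>1 \<omega>2 ** A ** transpose (S \<omega>1)) *v y)
                \<le> \<beta> * norm1 ((A ** transpose (S \<omega>1)) *v y))"
    and "\<forall>\<omega>1\<in>space M. \<forall>P :: real^'d^'n.
           (\<integral>\<^sup>+ \<omega>2. ennreal (norm12 (L \<omega>1 \<omega>2 ** P)) \<partial>N) = ennreal (norm12 P)"
  shows "\<exists>E\<in>sets (M \<Otimes>\<^sub>M N). measure (M \<Otimes>\<^sub>M N) E \<ge> 3/5 \<and>
           (\<forall>(\<omega>1, \<omega>2)\<in>E. \<forall>X :: real^'d^'m.
              norm12 (L \<omega>1 \<omega>2 ** A ** transpose (S \<omega>1) ** X - L \<omega>1 \<omega>2 ** A)
                \<le> 10 * SubApx k A \<longrightarrow>
              norm12 (A ** transpose (S \<omega>1) ** X - A) \<le> (2 + 40 / \<alpha>) * SubApx k A)"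
proof -
  interpret pair_prob_space M N
    using assms(4,5) by (simp add: pair_prob_space_def pair_sigma_finite_def prob_space_imp_sigma_finite)
  define W where "W \<omega> = A ** transpose (S \<omega>)" for \<omega>
  define SA where "SA = SubApx k A"
  have "0 \<le> SA"
    unfolding SA_def by (rule SubApx_nonneg)
  obtain E1 where E1: "E1 \<in> sets M" "9/10 \<le> measure M E1"
    "\<And>\<omega>. \<omega> \<in> E1 \<Longrightarrow> rank_k_cost k A (S \<omega>) \<le> 3/2 * SA"
    using assms(8) unfolding SA_def by blast
  obtain E2 where E2: "E2 \<in> sets (M \<Otimes>\<^sub>M N)" "9/10 \<le> measure (M \<Otimes>\<^sub>M N) E2"
    "\<And>\<omega> \<omega>' y. (\<omega>, \<omega>') \<in> E2 \<Longrightarrow> \<alpha> * norm1 (W \<omega> *v y) \<le> norm1 ((L \<omega> \<omega>' ** W \<omega>) *v y)"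
    using assms(9) unfolding W_def by (fastforce simp: matrix_mul_assoc)
  interpret unbiased_estimator M N "\<lambda>X \<omega>. norm12 (W \<omega> ** X - A)"
    "\<lambda>X \<omega> \<omega>'. norm12 (L \<omega> \<omega>' ** (W \<omega> ** X - A))"
    using assms(10) unfolding W_def
    by unfold_locales
      (auto simp: borel_measurable_sketch_costs[OF assms(6,7)] norm12_nonneg intro!: continuous_intros)
  have "\<exists>X'. norm12 (W \<omega> ** X' - A) < c" if "\<omega> \<in> E1" "3/2 * SA < c" for \<omega> c
    unfolding W_def using E1(3)[OF that(1)] that(2)
    by (intro ex_norm12_less_of_rank_k_cost_less[where k=k]) linarith
  then have "\<exists>F\<in>sets (M \<Otimes>\<^sub>M N). (1 - 1/10) * measure M E1 \<le> measure (M \<Otimes>\<^sub>M N) F \<and>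
      (\<forall>(\<omega>, \<omega>')\<in>F. \<forall>c>3/2 * SA.
         \<exists>X'. norm12 (W \<omega> ** X' - A) < c \<and> norm12 (L \<omega> \<omega>' ** (W \<omega> ** X' - A)) \<le> 10 * c)"
    using E1(1) by (intro witness_event) auto
  then obtain F where F: "F \<in> sets (M \<Otimes>\<^sub>M N)" "(1 - 1/10) * measure M E1 \<le> measure (M \<Otimes>\<^sub>M N) F"
    "\<And>\<omega> \<omega>' c. (\<omega>, \<omega>') \<in> F \<Longrightarrow> 3/2 * SA < c \<Longrightarrow>
       \<exists>X'. norm12 (W \<omega> ** X' - A) < c \<and> norm12 (L \<omega> \<omega>' ** (W \<omega> ** X' - A)) \<le> 10 * c"
    by blast
  have "3/5 \<le> measure (M \<Otimes>\<^sub>M N) (E2 \<inter> F)"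
    using prob_Int_ge[OF E2(1) F(1)] E1(2) E2(2) F(2) by simp
  moreover have "norm12 (W \<omega> ** X - A) \<le> (2 + 40/\<alpha>) * SA"
    if "(\<omega>, \<omega>') \<in> E2 \<inter> F" and "norm12 (L \<omega> \<omega>' ** W \<omega> ** X - L \<omega> \<omega>' ** A) \<le> 10 * SA"
    for \<omega> \<omega>' X
  proof -
    have "norm12 (W \<omega> ** X - A) \<le> (10 * SA + 10 * (3/2 * SA)) / \<alpha> + 3/2 * SA"
      using that E2(3) F(3) by (intro norm12_residual_le_of_witnesses[OF assms(2)]) auto
    also have "\<dots> \<le> (2 + 40/\<alpha>) * SA"
      using assms(2) \<open>0 \<le> SA\<close> by (simp add: field_simps)
    finally show ?thesis .
  qed
  ultimately show ?thesis
    using E2(1) F(1) unfolding W_def SA_def by (intro bexI[of _ "E2 \<inter> F"]) (auto simp: matrix_mul_assoc)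
qed

end
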